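(* Let $k\ge1$ and $d$ be integers with $k\mid d$, and set $m=d/k$. Let $X_{ij}\in\mathbb{R}^{1\times m}$ for $i=1,\dots,n$, $j=1,\dots,k$, let $w^*\in\mathbb{R}^m$, and suppose $X_{ij}w^*\neq0$ for all $i,j$. Let $y_i=\sum_{j=1}^k(X_{ij}w^* )_+$ and $r\in\mathbb{R}^m$. Consider the linear program $$\max_{w\in\mathbb{R}^m,\ z\in\mathbb{R}^{n\times k}}\ r^Tw\quad\text{s.t.}\quad z_{ij}\ge0,\ \ \sum_{j=1}^kz_{ij}=y_i\ (i=1,\dots,n),\ \ z_{ij}\ge X_{ij}w\ \ \forall (i,j).$$ For $i=1,\dots,n$ let $R_i=\{j\in\{1,\dots,k\}: X_{ij}w^*>0\}$. Then the feasible point $(w^*,z^* )$ with $z^*_{ij}=(X_{ij}w^* )_+$ is an optimal solution of this linear program if and only if $$r\in\operatorname{cone}\Big\{\textstyle\sum_{j\in R_i}X_{ij}^T:\ i=1,\dots,n\Big\},$$ equivalently, iff there exists $v\in\mathbb{R}^n$ with $v_{S_j}\ge0$ for all $j$ and $\sum_{j=1}^kX_{S_j,j}^Tv_{S_j}=r$, where $S_j=\{i: X_{ij}w^*>0\}$, $v_{S_j}$ is the subvector of $v$ indexed by $S_j$, and $X_{S_j,j}$ is the matrix with rows $X_{ij}$, $i\in S_j$.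
   Context: This models a one-hidden-layer convolutional network with a filter $w\in\mathbb{R}^{d/k}$ applied without overlap: $X_{ij}$ is the $j$-th length-$d/k$ block of the $i$-th data vector. $(u)_+=\max(u,0)$; $\operatorname{cone}(A)$ denotes the set of nonnegative linear combinations of vectors in $A$; an empty sum is the zero vector. *)

theory Defs
  imports "HOL-Analysis.Analysis"
begin

definition pos_part :: "real \<Rightarrow> real" where
  "pos_part u = max u 0"

definition nonneg_cone :: "('a::real_vector) set \<Rightarrow> 'a set" where
  "nonneg_cone A = {x. \<exists>F c. finite F \<and> F \<subseteq> A \<and> (\<forall>v\<in>F. c v \<ge> 0) \<and> x = (\<Sum>v\<in>F. c v *\<^sub>R v)}"

text \<open>Feasibility for the LP; data rows X i j (i<n, j<k), row-times-vector as inner product.\<close>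
definition lp_feasible ::
  "nat \<Rightarrow> nat \<Rightarrow> (nat \<Rightarrow> nat \<Rightarrow> real^'m) \<Rightarrow> (nat \<Rightarrow> real) \<Rightarrow> real^'m \<Rightarrow> (nat \<Rightarrow> nat \<Rightarrow> real) \<Rightarrow> bool"
  where
  "lp_feasible n k X y w z \<longleftrightarrow>
     (\<forall>i<n. \<forall>j<k. z i j \<ge> 0 \<and> z i j \<ge> X i j \<bullet> w) \<and> (\<forall>i<n. (\<Sum>j<k. z i j) = y i)"

definition lp_optimal ::
  "nat \<Rightarrow> nat \<Rightarrow> (nat \<Rightarrow> nat \<Rightarrow> real^'m) \<Rightarrow> (nat \<Rightarrow> real) \<Rightarrow> real^'m \<Rightarrow> real^'m \<Rightarrow> (nat \<Rightarrow> nat \<Rightarrow> real) \<Rightarrow> bool"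
  where
  "lp_optimal n k X y r w z \<longleftrightarrow> lp_feasible n k X y w z \<and>
     (\<forall>w' z'. lp_feasible n k X y w' z' \<longrightarrow> r \<bullet> w' \<le> r \<bullet> w)"

end

theory Submission
  imports Defs
begin

text \<open>Write \<open>a\<^sub>i = \<Sum>j\<in>R\<^sub>i. X\<^sub>i\<^sub>j\<close>. Every feasible \<open>w\<close> satisfies
  \<open>a\<^sub>i \<bullet> w \<le> \<Sum>j\<in>R\<^sub>i. z\<^sub>i\<^sub>j \<le> y\<^sub>i = a\<^sub>i \<bullet> w\<^sup>*\<close>, so each nonnegative combination
  of the \<open>a\<^sub>i\<close> is maximised at \<open>w\<^sup>*\<close>. Conversely, if \<open>r\<close> lies outside this finitely generated
  cone, Farkas' lemma yields \<open>g\<close> with \<open>g \<bullet> r > 0\<close> and \<open>g \<bullet> a\<^sub>i \<le> 0\<close>. As no \<open>X\<^sub>i\<^sub>j \<bullet> w\<^sup>*\<close>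
  vanishes, \<open>w\<^sup>* + t g\<close> has the same active sets \<open>R\<^sub>i\<close> for small \<open>t > 0\<close>; it is then still
  feasible and has a larger objective. The second characterisation is the first with the double
  sum regrouped by rows.\<close>

lemma nonneg_cone_image_iff:
  fixes a :: "'i \<Rightarrow> 'a::real_vector"
  assumes "finite I"
  shows "r \<in> nonneg_cone (a ` I) \<longleftrightarrow> (\<exists>c. (\<forall>i\<in>I. 0 \<le> c i) \<and> r = (\<Sum>i\<in>I. c i *\<^sub>R a i))"
proof
  assume "r \<in> nonneg_cone (a ` I)"
  then obtain F c where F: "F \<subseteq> a ` I" "\<forall>v\<in>F. 0 \<le> c v"
    and r: "r = (\<Sum>v\<in>F. c v *\<^sub>R v)"
    unfolding nonneg_cone_def by blast
  define idx where "idx = inv_into I a"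
  have idx: "idx v \<in> I" "a (idx v) = v" if "v \<in> F" for v
    using that F(1) unfolding idx_def by (auto intro: inv_into_into f_inv_into_f)
  then have "inj_on idx F" by (metis inj_onI)
  have "r = (\<Sum>i\<in>idx ` F. c (a i) *\<^sub>R a i)"
    unfolding r using \<open>inj_on idx F\<close> idx(2) by (simp add: sum.reindex)
  also have "\<dots> = (\<Sum>i\<in>I. (if i \<in> idx ` F then c (a i) else 0) *\<^sub>R a i)"
    using assms idx(1) by (intro sum.mono_neutral_cong_left) auto
  finally show "\<exists>c. (\<forall>i\<in>I. 0 \<le> c i) \<and> r = (\<Sum>i\<in>I. c i *\<^sub>R a i)"
    using F(2) idx(2) by (intro exI conjI) auto
next
  assume "\<exists>c. (\<forall>i\<in>I. 0 \<le> c i) \<and> r = (\<Sum>i\<in>I. c i *\<^sub>R a i)"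
  then obtain c where c: "\<forall>i\<in>I. 0 \<le> c i" and r: "r = (\<Sum>i\<in>I. c i *\<^sub>R a i)" by blast
  define c' where "c' v = (\<Sum>i | i \<in> I \<and> a i = v. c i)" for v
  have "r = (\<Sum>v\<in>a ` I. \<Sum>i | i \<in> I \<and> a i = v. c i *\<^sub>R a i)"
    unfolding r using assms by (rule sum.image_gen)
  also have "\<dots> = (\<Sum>v\<in>a ` I. c' v *\<^sub>R v)"
    unfolding c'_def by (auto simp: scaleR_sum_left intro!: sum.cong)
  finally show "r \<in> nonneg_cone (a ` I)"
    unfolding nonneg_cone_def using assms c
    by (intro CollectI exI[of _ "a ` I"] exI[of _ c']) (auto simp: c'_def intro!: sum_nonneg)
qed

lemma convex_cone_nonneg_cone:
  fixes A :: "'a::real_vector set"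
  assumes "finite A"
  shows "convex_cone (nonneg_cone A)"
proof -
  have cone: "nonneg_cone A = {\<Sum>v\<in>A. c v *\<^sub>R v | c. \<forall>v\<in>A. 0 \<le> c v}"
    using nonneg_cone_image_iff[OF assms, where a = "\<lambda>v. v"] by auto
  show ?thesis
    unfolding cone convex_cone_iff
  proof (intro conjI ballI allI impI)
    show "0 \<in> {\<Sum>v\<in>A. c v *\<^sub>R v | c. \<forall>v\<in>A. 0 \<le> c v}"
      by (intro CollectI exI[of _ "\<lambda>_. 0"]) simp
  next
    fix x y assume "x \<in> {\<Sum>v\<in>A. c v *\<^sub>R v | c. \<forall>v\<in>A. 0 \<le> c v}"
      and "y \<in> {\<Sum>v\<in>A. c v *\<^sub>R v | c. \<forall>v\<in>A. 0 \<le> c v}"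
    then obtain c c' where "\<forall>v\<in>A. 0 \<le> c v" "\<forall>v\<in>A. 0 \<le> c' v"
      "x = (\<Sum>v\<in>A. c v *\<^sub>R v)" "y = (\<Sum>v\<in>A. c' v *\<^sub>R v)" by blast
    then show "x + y \<in> {\<Sum>v\<in>A. c v *\<^sub>R v | c. \<forall>v\<in>A. 0 \<le> c v}"
      by (intro CollectI exI[of _ "\<lambda>v. c v + c' v"]) (simp add: sum.distrib scaleR_add_left)
  next
    fix x and s :: real
    assume "x \<in> {\<Sum>v\<in>A. c v *\<^sub>R v | c. \<forall>v\<in>A. 0 \<le> c v}" and "0 \<le> s"
    then obtain c where "\<forall>v\<in>A. 0 \<le> c v" "x = (\<Sum>v\<in>A. c v *\<^sub>R v)" by blast
    with \<open>0 \<le> s\<close> show "s *\<^sub>R x \<in> {\<Sum>v\<in>A. c v *\<^sub>R v | c. \<forall>v\<in>A. 0 \<le> c v}"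
      by (intro CollectI exI[of _ "\<lambda>v. s * c v"]) (simp add: scaleR_sum_right)
  qed
qed

lemma farkas_nonneg_cone:
  fixes A :: "'a::euclidean_space set"
  assumes "finite A" "r \<notin> nonneg_cone A"
  shows "\<exists>g. 0 < g \<bullet> r \<and> (\<forall>v\<in>A. g \<bullet> v \<le> 0)"
proof -
  define H where "H = convex_cone hull A"
  have "H \<subseteq> nonneg_cone A"
    unfolding H_def
  proof (rule hull_minimal)
    show "A \<subseteq> nonneg_cone A"
      unfolding nonneg_cone_def by (force intro!: exI[of _ "{_}"] exI[of _ "\<lambda>_. 1"])
  qed (rule convex_cone_nonneg_cone[OF assms(1)])
  then have "r \<notin> H" using assms(2) by blast
  moreover have "convex H" "closed H"
    unfolding H_def by (simp_all add: convex_convex_cone_hull closed_convex_cone_hull assms(1))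
  ultimately obtain u b where sep: "u \<bullet> r < b" "\<forall>x\<in>H. b < u \<bullet> x"
    using separating_hyperplane_closed_point by blast
  have "b < 0"
    using sep(2) convex_cone_hull_contains_0[of A] unfolding H_def by force
  have "0 \<le> u \<bullet> v" if "v \<in> A" for v
  proof (rule ccontr)
    assume neg: "\<not> 0 \<le> u \<bullet> v"
    have "(b / (u \<bullet> v)) *\<^sub>R v \<in> H"
      unfolding H_def using that neg \<open>b < 0\<close>
      by (intro convex_cone_hull_mul hull_inc) (auto simp: divide_nonpos_neg)
    with sep(2) neg show False by force
  qed
  with sep(1) \<open>b < 0\<close> show ?thesis by (intro exI[of _ "- u"]) auto
qed

lemma small_perturbation_preserves_signs:
  fixes s q :: "'i \<Rightarrow> real"
  assumes "finite I" "\<forall>x\<in>I. s x \<noteq> 0"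
  shows "\<exists>t>0. \<forall>x\<in>I. 0 < s x + t * q x \<longleftrightarrow> 0 < s x"
proof -
  have "\<forall>\<^sub>F t in at_right 0. 0 < s x + t * q x \<longleftrightarrow> 0 < s x" if x: "x \<in> I" for x
  proof -
    have "((\<lambda>t. s x + t * q x) \<longlongrightarrow> s x + 0 * q x) (at_right 0)"
      by (intro tendsto_intros)
    then have lim: "((\<lambda>t. s x + t * q x) \<longlongrightarrow> s x) (at_right 0)" by simp
    consider "0 < s x" | "s x < 0" using assms(2) x by force
    then show ?thesis
    proof cases
      case 1
      show ?thesis using order_tendstoD(1)[OF lim 1] by (rule eventually_mono) (use 1 in simp)
    next
      case 2
      show ?thesis using order_tendstoD(2)[OF lim 2] by (rule eventually_mono) (use 2 in simp)
    qed
  qed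
  then have "\<forall>\<^sub>F t in at_right 0. \<forall>x\<in>I. 0 < s x + t * q x \<longleftrightarrow> 0 < s x"
    using assms(1) by (simp add: eventually_ball_finite)
  moreover have "\<forall>\<^sub>F t in at_right (0::real). 0 < t"
    by (simp add: eventually_at_right_less)
  ultimately have "\<forall>\<^sub>F t in at_right 0. 0 < t \<and> (\<forall>x\<in>I. 0 < s x + t * q x \<longleftrightarrow> 0 < s x)"
    by eventually_elim simp
  then show ?thesis
    using eventually_happens trivial_limit_at_right_real by blast
qed

definition active_sum :: "nat \<Rightarrow> (nat \<Rightarrow> nat \<Rightarrow> 'a::real_inner) \<Rightarrow> 'a \<Rightarrow> nat \<Rightarrow> 'a" where
  "active_sum k X w i = (\<Sum>j\<in>{j. j < k \<and> 0 < X i j \<bullet> w}. X i j)"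

lemma sum_pos_part_eq_inner_active_sum:
  "(\<Sum>j<k. pos_part (X i j \<bullet> w)) = active_sum k X w i \<bullet> w"
proof -
  have "(\<Sum>j<k. pos_part (X i j \<bullet> w)) = (\<Sum>j\<in>{j\<in>{..<k}. 0 < X i j \<bullet> w}. X i j \<bullet> w)"
    by (subst sum.inter_filter) (auto simp: pos_part_def intro!: sum.cong)
  then show ?thesis
    by (simp add: active_sum_def inner_sum_left)
qed

lemma lp_feasible_partial_sum_le:
  assumes "lp_feasible n k X y w z" "i < n" "J \<subseteq> {..<k}"
  shows "(\<Sum>j\<in>J. X i j \<bullet> w) \<le> y i"
proof -
  have "(\<Sum>j\<in>J. X i j \<bullet> w) \<le> (\<Sum>j\<in>J. z i j)"
    using assms by (intro sum_mono) (auto simp: lp_feasible_def)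
  also have "\<dots> \<le> (\<Sum>j<k. z i j)"
    using assms by (intro sum_mono2) (auto simp: lp_feasible_def)
  also have "\<dots> = y i"
    using assms by (simp add: lp_feasible_def)
  finally show ?thesis .
qed

lemma lp_feasible_pos_part:
  "lp_feasible n k X (\<lambda>i. \<Sum>j<k. pos_part (X i j \<bullet> w)) w (\<lambda>i j. pos_part (X i j \<bullet> w))"
  by (simp add: lp_feasible_def pos_part_def)

lemma lp_feasible_if_sum_pos_part_le:
  assumes "1 \<le> k" "\<forall>i<n. (\<Sum>j<k. pos_part (X i j \<bullet> w)) \<le> y i"
  shows "\<exists>z. lp_feasible n k X y w z"
proof
  \<comment> \<open>the slack of row i is put into column 0\<close>
  define z where "z i j = pos_part (X i j \<bullet> w)
      + (if j = 0 then y i - (\<Sum>j<k. pos_part (X i j \<bullet> w)) else 0)" for i j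
  have "0 \<in> {..<k}" using assms(1) by simp
  then show "lp_feasible n k X y w z"
    using assms(2) by (auto simp: lp_feasible_def z_def pos_part_def sum.distrib)
qed

lemma lp_optimal_if_in_active_cone:
  assumes "r \<in> nonneg_cone (active_sum k X w ` {..<n})"
  shows "lp_optimal n k X (\<lambda>i. \<Sum>j<k. pos_part (X i j \<bullet> w)) r w (\<lambda>i j. pos_part (X i j \<bullet> w))"
  unfolding lp_optimal_def
proof (intro conjI allI impI lp_feasible_pos_part)
  fix w' z'
  assume feasible: "lp_feasible n k X (\<lambda>i. \<Sum>j<k. pos_part (X i j \<bullet> w)) w' z'"
  obtain c where c: "\<forall>i<n. 0 \<le> c i" and r: "r = (\<Sum>i<n. c i *\<^sub>R active_sum k X w i)"
    using assms by (auto simp: nonneg_cone_image_iff)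
  have "active_sum k X w i \<bullet> w' \<le> active_sum k X w i \<bullet> w" if "i < n" for i
    using lp_feasible_partial_sum_le[OF feasible that, of "{j. j < k \<and> 0 < X i j \<bullet> w}"]
    by (auto simp: active_sum_def inner_sum_left sum_pos_part_eq_inner_active_sum)
  then show "r \<bullet> w' \<le> r \<bullet> w"
    unfolding r inner_sum_left using c by (intro sum_mono) (simp add: mult_left_mono)
qed

lemma in_active_cone_if_lp_optimal:
  assumes "1 \<le> k" "\<forall>i<n. \<forall>j<k. X i j \<bullet> w \<noteq> 0"
    and optimal: "lp_optimal n k X (\<lambda>i. \<Sum>j<k. pos_part (X i j \<bullet> w)) r w z"
  shows "r \<in> nonneg_cone (active_sum k X w ` {..<n})"
proof (rule ccontr)
  assume "r \<notin> nonneg_cone (active_sum k X w ` {..<n})"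
  then obtain g where g: "0 < g \<bullet> r" "\<forall>i<n. g \<bullet> active_sum k X w i \<le> 0"
    using farkas_nonneg_cone[OF finite_imageI[OF finite_lessThan]] by blast
  \<comment> \<open>moving w a little in direction g keeps every sign of X i j \<bullet> w, hence the active sets\<close>
  obtain t where "0 < t"
    and t: "\<forall>i<n. \<forall>j<k. 0 < X i j \<bullet> w + t * (X i j \<bullet> g) \<longleftrightarrow> 0 < X i j \<bullet> w"
    using small_perturbation_preserves_signs[of "{..<n} \<times> {..<k}"
        "\<lambda>(i, j). X i j \<bullet> w" "\<lambda>(i, j). X i j \<bullet> g"] assms(2)
    by (simp add: case_prod_beta) blast
  define w' where "w' = w + t *\<^sub>R g"
  have same_active: "active_sum k X w' i = active_sum k X w i" if "i < n" for i
    using t that unfolding active_sum_def w'_def by (intro sum.cong) (auto simp: inner_add_right)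
  have "(\<Sum>j<k. pos_part (X i j \<bullet> w')) \<le> (\<Sum>j<k. pos_part (X i j \<bullet> w))" if i: "i < n" for i
  proof -
    have "(\<Sum>j<k. pos_part (X i j \<bullet> w')) = active_sum k X w i \<bullet> w'"
      using same_active[OF i] by (simp add: sum_pos_part_eq_inner_active_sum)
    also have "\<dots> = active_sum k X w i \<bullet> w + t * (active_sum k X w i \<bullet> g)"
      by (simp add: w'_def inner_add_right)
    also have "\<dots> \<le> active_sum k X w i \<bullet> w"
      using g(2) \<open>0 < t\<close> i by (simp add: inner_commute[of _ g] mult_nonneg_nonpos)
    finally show ?thesis
      by (simp add: sum_pos_part_eq_inner_active_sum)
  qed
  then have "\<exists>z'. lp_feasible n k X (\<lambda>i. \<Sum>j<k. pos_part (X i j \<bullet> w)) w' z'"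
    by (intro lp_feasible_if_sum_pos_part_le[OF assms(1)]) blast
  with optimal have "r \<bullet> w' \<le> r \<bullet> w"
    unfolding lp_optimal_def by blast
  moreover have "r \<bullet> w' = r \<bullet> w + t * (g \<bullet> r)"
    by (simp add: w'_def inner_add_right inner_commute[of r])
  ultimately show False
    using mult_pos_pos[OF \<open>0 < t\<close> g(1)] by linarith
qed

lemma sum_active_rows_eq_sum_active_sum:
  "(\<Sum>j<k. \<Sum>i\<in>{i. i < n \<and> 0 < X i j \<bullet> w}. v i *\<^sub>R X i j)
     = (\<Sum>i<n. v i *\<^sub>R active_sum k X w i)"
proof -
  have "(\<Sum>j<k. \<Sum>i\<in>{i. i < n \<and> 0 < X i j \<bullet> w}. v i *\<^sub>R X i j)
      = (\<Sum>j<k. \<Sum>i<n. if 0 < X i j \<bullet> w then v i *\<^sub>R X i j else 0)"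
    by (simp add: sum.inter_filter[symmetric] lessThan_def conj_commute)
  also have "\<dots> = (\<Sum>i<n. \<Sum>j<k. if 0 < X i j \<bullet> w then v i *\<^sub>R X i j else 0)"
    by (rule sum.swap)
  also have "\<dots> = (\<Sum>i<n. v i *\<^sub>R active_sum k X w i)"
    by (simp add: active_sum_def scaleR_sum_right sum.inter_filter[symmetric] lessThan_def conj_commute)
  finally show ?thesis .
qed

lemma active_rows_combination_iff_in_active_cone:
  "(\<exists>v. (\<forall>j<k. \<forall>i\<in>{i. i < n \<and> 0 < X i j \<bullet> w}. 0 \<le> v i) \<and>
        (\<Sum>j<k. \<Sum>i\<in>{i. i < n \<and> 0 < X i j \<bullet> w}. v i *\<^sub>R X i j) = r)
   \<longleftrightarrow> r \<in> nonneg_cone (active_sum k X w ` {..<n})"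
  unfolding sum_active_rows_eq_sum_active_sum nonneg_cone_image_iff[OF finite_lessThan]
proof
  assume "\<exists>v. (\<forall>j<k. \<forall>i\<in>{i. i < n \<and> 0 < X i j \<bullet> w}. 0 \<le> v i) \<and>
        (\<Sum>i<n. v i *\<^sub>R active_sum k X w i) = r"
  then obtain v where v: "\<forall>j<k. \<forall>i\<in>{i. i < n \<and> 0 < X i j \<bullet> w}. 0 \<le> v i"
    and r: "r = (\<Sum>i<n. v i *\<^sub>R active_sum k X w i)" by auto
  \<comment> \<open>a row with a negative coefficient has no active block, so its active sum vanishes\<close>
  have "v i *\<^sub>R active_sum k X w i = max (v i) 0 *\<^sub>R active_sum k X w i" if "i < n" for i
  proof (cases "0 \<le> v i")
    case False
    with v that have "active_sum k X w i = 0"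
      by (auto simp: active_sum_def intro!: sum.neutral)
    then show ?thesis by simp
  qed simp
  then show "\<exists>c. (\<forall>i\<in>{..<n}. 0 \<le> c i) \<and> r = (\<Sum>i<n. c i *\<^sub>R active_sum k X w i)"
    unfolding r by (intro exI[of _ "\<lambda>i. max (v i) 0"]) (auto intro!: sum.cong)
qed auto

theorem mainTheorem3:
  fixes d k n :: nat
    and X :: "nat \<Rightarrow> nat \<Rightarrow> real^'m"
    and wstar r :: "real^'m"
  assumes "k \<ge> 1" and "k dvd d" and "CARD('m) = d div k"
    and "\<forall>i<n. \<forall>j<k. X i j \<bullet> wstar \<noteq> 0"
  defines "y \<equiv> (\<lambda>i. \<Sum>j<k. pos_part (X i j \<bullet> wstar))"
    and "zstar \<equiv> (\<lambda>i j. pos_part (X i j \<bullet> wstar))"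
    and "R \<equiv> (\<lambda>i. {j. j < k \<and> X i j \<bullet> wstar > 0})"
    and "S \<equiv> (\<lambda>j. {i. i < n \<and> X i j \<bullet> wstar > 0})"
  shows "(lp_optimal n k X y r wstar zstar \<longleftrightarrow>
            r \<in> nonneg_cone ((\<lambda>i. \<Sum>j\<in>R i. X i j) ` {..<n}))
       \<and> (lp_optimal n k X y r wstar zstar \<longleftrightarrow>
            (\<exists>v :: nat \<Rightarrow> real. (\<forall>j<k. \<forall>i\<in>S j. v i \<ge> 0) \<and>
               (\<Sum>j<k. \<Sum>i\<in>S j. v i *\<^sub>R X i j) = r))"
proof -
  \<comment> \<open>the hypotheses on \<open>d\<close> only describe the block length; the argument does not use them\<close>
  have active: "(\<lambda>i. \<Sum>j\<in>R i. X i j) = active_sum k X wstar"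
    unfolding R_def active_sum_def ..
  have optimal: "lp_optimal n k X y r wstar zstar \<longleftrightarrow> r \<in> nonneg_cone (active_sum k X wstar ` {..<n})"
    unfolding y_def zstar_def
    using lp_optimal_if_in_active_cone in_active_cone_if_lp_optimal assms(1,4) by blast
  show ?thesis
    unfolding active optimal S_def active_rows_combination_iff_in_active_cone by simp
qed

end
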